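(* The path functor $P:\mathsf{RSRel}\to\mathsf{Met}$ is fully faithful and is left adjoint to the functor $Q:\mathsf{Met}\to\mathsf{RSRel}$.
   Context: $\mathsf{RSRel}$: objects are pairs $X=(|X|,\sim_X)$ of a set and a reflexive symmetric relation on it; morphisms are functions $f$ with $x\sim x'\Rightarrow f(x)\sim f(x')$. $\mathsf{Met}$: objects are extended pseudo-metric spaces $(|X|,d)$ with $d:|X|\times|X|\to[0,\infty]$, $d(x,x)=0$, symmetric, satisfying the triangle inequality; morphisms are non-expansive maps ($d(f(x),f(y))\le d(x,y)$). For $X\in\mathsf{RSRel}$, $PX$ is $|X|$ with the path metric: $d(x,x')$ is the least $k$ such that there are $x_0=x,x_1,\dots,x_k=x'$ with $x_i\sim x_{i+1}$ for all $i<k$, and $\infty$ if no such sequence exists; $P$ is the identity on morphisms. For $Y\in\mathsf{Met}$, $QY=(|Y|,\{(y,y'):d(y,y')\le1\})$, and $Q$ is the identity on morphisms. *)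

theory Defs
  imports "HOL-Library.Extended_Nonnegative_Real"
begin

definition rsrel :: "'a set \<Rightarrow> ('a \<Rightarrow> 'a \<Rightarrow> bool) \<Rightarrow> bool" where
  "rsrel A R \<longleftrightarrow> (\<forall>x\<in>A. R x x) \<and> (\<forall>x\<in>A. \<forall>y\<in>A. R x y \<longrightarrow> R y x)"

definition rsrel_hom :: "'a set \<Rightarrow> ('a \<Rightarrow> 'a \<Rightarrow> bool) \<Rightarrow> 'b set \<Rightarrow> ('b \<Rightarrow> 'b \<Rightarrow> bool) \<Rightarrow> ('a \<Rightarrow> 'b) \<Rightarrow> bool" where
  "rsrel_hom A R B S f \<longleftrightarrow> f \<in> A \<rightarrow> B \<and> (\<forall>x\<in>A. \<forall>y\<in>A. R x y \<longrightarrow> S (f x) (f y))"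

definition met :: "'a set \<Rightarrow> ('a \<Rightarrow> 'a \<Rightarrow> ennreal) \<Rightarrow> bool" where
  "met A d \<longleftrightarrow> (\<forall>x\<in>A. d x x = 0) \<and> (\<forall>x\<in>A. \<forall>y\<in>A. d x y = d y x)
     \<and> (\<forall>x\<in>A. \<forall>y\<in>A. \<forall>z\<in>A. d x z \<le> d x y + d y z)"

definition met_hom :: "'a set \<Rightarrow> ('a \<Rightarrow> 'a \<Rightarrow> ennreal) \<Rightarrow> 'b set \<Rightarrow> ('b \<Rightarrow> 'b \<Rightarrow> ennreal) \<Rightarrow> ('a \<Rightarrow> 'b) \<Rightarrow> bool" where
  "met_hom A d B e f \<longleftrightarrow> f \<in> A \<rightarrow> B \<and> (\<forall>x\<in>A. \<forall>y\<in>A. e (f x) (f y) \<le> d x y)"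

text \<open>Path metric of P: least length k of a chain x = x_0 ~ x_1 ~ ... ~ x_k = x' in the carrier;
  the infimum of the empty set is \<infinity>.\<close>
definition path_dist :: "'a set \<Rightarrow> ('a \<Rightarrow> 'a \<Rightarrow> bool) \<Rightarrow> 'a \<Rightarrow> 'a \<Rightarrow> ennreal" where
  "path_dist A R x y = Inf {of_nat k | k. \<exists>p :: nat \<Rightarrow> 'a. p 0 = x \<and> p k = y
       \<and> (\<forall>i\<le>k. p i \<in> A) \<and> (\<forall>i<k. R (p i) (p (Suc i)))}"

definition Q_rel :: "('a \<Rightarrow> 'a \<Rightarrow> ennreal) \<Rightarrow> 'a \<Rightarrow> 'a \<Rightarrow> bool" where
  "Q_rel d y y' \<longleftrightarrow> d y y' \<le> 1"

end

theory Submission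
  imports Defs
begin

text \<open>The path metric is the largest extended pseudo-metric in which related points are at
  distance at most 1: a walk of length \<open>k\<close> whose steps have length at most 1 spans distance
  at most \<open>k\<close> by the triangle inequality. This is exactly the adjunction \<open>P \<stileturn> Q\<close>, with the
  identity as bijection of hom-sets. Moreover \<open>Q (P X) = X\<close>, because points at path distance at
  most 1 are either equal or related; so the unit of the adjunction is the identity and \<open>P\<close> is
  fully faithful.\<close>

definition walk :: "'a set \<Rightarrow> ('a \<Rightarrow> 'a \<Rightarrow> bool) \<Rightarrow> 'a \<Rightarrow> 'a \<Rightarrow> nat \<Rightarrow> bool" where
  "walk A R x y k \<longleftrightarrow> (\<exists>p :: nat \<Rightarrow> 'a. p 0 = x \<and> p k = y
       \<and> (\<forall>i\<le>k. p i \<in> A) \<and> (\<forall>i<k. R (p i) (p (Suc i))))"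

lemma path_dist_eq_Inf_walk: "path_dist A R x y = Inf {of_nat k | k. walk A R x y k}"
  unfolding path_dist_def walk_def by simp

lemma walk_0_iff: "walk A R x y 0 \<longleftrightarrow> x \<in> A \<and> y = x"
  unfolding walk_def by auto

lemma walk_Suc_iff: "walk A R x z (Suc k) \<longleftrightarrow> (\<exists>y. walk A R x y k \<and> z \<in> A \<and> R y z)"
proof
  assume "walk A R x z (Suc k)"
  then obtain p where p: "p 0 = x" "p (Suc k) = z" "\<forall>i\<le>Suc k. p i \<in> A"
      "\<forall>i<Suc k. R (p i) (p (Suc i))"
    unfolding walk_def by blast
  then have "walk A R x (p k) k" unfolding walk_def by auto
  with p show "\<exists>y. walk A R x y k \<and> z \<in> A \<and> R y z" by auto
next
  assume "\<exists>y. walk A R x y k \<and> z \<in> A \<and> R y z"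
  then obtain y p where z: "z \<in> A" "R y z" and p: "p 0 = x" "p k = y" "\<forall>i\<le>k. p i \<in> A"
      "\<forall>i<k. R (p i) (p (Suc i))"
    unfolding walk_def by blast
  show "walk A R x z (Suc k)" unfolding walk_def
  proof (rule exI[of _ "p(Suc k := z)"], intro conjI allI impI)
    fix i assume "i \<le> Suc k"
    then show "(p(Suc k := z)) i \<in> A" using z p by (cases "i = Suc k") auto
  next
    fix i assume "i < Suc k"
    then show "R ((p(Suc k := z)) i) ((p(Suc k := z)) (Suc i))" using z p
      by (cases "i = k") auto
  qed (use p z in auto)
qed

lemma walk_Suc_0_iff: "walk A R x y (Suc 0) \<longleftrightarrow> x \<in> A \<and> y \<in> A \<and> R x y"
  by (auto simp: walk_Suc_iff walk_0_iff)

lemma walk_in_carrier: "walk A R x y k \<Longrightarrow> x \<in> A \<and> y \<in> A"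
  unfolding walk_def by auto

lemma walk_append: "walk A R x y k \<Longrightarrow> walk A R y z m \<Longrightarrow> walk A R x z (k + m)"
proof (induction m arbitrary: z)
  case 0
  then show ?case by (simp add: walk_0_iff)
next
  case (Suc m)
  then show ?case by (auto simp: walk_Suc_iff)
qed

lemma walk_reverse:
  assumes sym: "\<And>x y. x \<in> A \<Longrightarrow> y \<in> A \<Longrightarrow> R x y \<Longrightarrow> R y x"
  shows "walk A R x y k \<Longrightarrow> walk A R y x k"
proof (induction k arbitrary: y)
  case 0
  then show ?case by (simp add: walk_0_iff)
next
  case (Suc k)
  then obtain y' where y': "walk A R x y' k" "y \<in> A" "R y' y"
    by (auto simp: walk_Suc_iff)
  have "walk A R y y' 1"
    using y' walk_in_carrier[OF y'(1)] sym by (simp add: walk_Suc_0_iff)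
  moreover have "walk A R y' x k" using Suc.IH y'(1) .
  ultimately show ?case using walk_append by fastforce
qed

lemma path_dist_le_walk: "walk A R x y k \<Longrightarrow> path_dist A R x y \<le> of_nat k"
  unfolding path_dist_eq_Inf_walk by (rule Inf_lower) blast

lemma path_dist_cases:
  obtains (no_walk) "\<And>k. \<not> walk A R x y k" "path_dist A R x y = \<infinity>"
    | (shortest_walk) k where "walk A R x y k" "path_dist A R x y = of_nat k"
proof (cases "\<exists>k. walk A R x y k")
  case False
  then have "{of_nat k | k. walk A R x y k} = ({} :: ennreal set)" by auto
  then show ?thesis using False no_walk unfolding path_dist_eq_Inf_walk by simp
next
  case True
  define m where "m = (LEAST k. walk A R x y k)"
  have m: "walk A R x y m" using True unfolding m_def by (metis LeastI)
  have "path_dist A R x y = of_nat m"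
  proof (rule antisym)
    show "path_dist A R x y \<le> of_nat m" using m by (rule path_dist_le_walk)
    show "of_nat m \<le> path_dist A R x y" unfolding path_dist_eq_Inf_walk
      by (rule Inf_greatest) (auto simp: m_def intro: Least_le)
  qed
  then show ?thesis using m shortest_walk by blast
qed

lemma met_path_dist:
  assumes sym: "\<And>x y. x \<in> A \<Longrightarrow> y \<in> A \<Longrightarrow> R x y \<Longrightarrow> R y x"
  shows "met A (path_dist A R)"
proof -
  have zero: "path_dist A R x x = 0" if "x \<in> A" for x
    using path_dist_le_walk[of A R x x 0] that by (simp add: walk_0_iff)
  have "path_dist A R y x \<le> path_dist A R x y" for x y
    unfolding path_dist_eq_Inf_walk[of A R x y]
    by (rule Inf_greatest) (auto intro: path_dist_le_walk walk_reverse[OF sym])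
  then have commute: "path_dist A R x y = path_dist A R y x" for x y
    by (blast intro: antisym)
  have triangle: "path_dist A R x z \<le> path_dist A R x y + path_dist A R y z" for x y z
  proof (cases x y rule: path_dist_cases[where A = A and R = R])
    case (shortest_walk k)
    then show ?thesis
    proof (cases y z rule: path_dist_cases[where A = A and R = R])
      case (shortest_walk m)
      with \<open>walk A R x y k\<close> have "path_dist A R x z \<le> of_nat (k + m)"
        by (intro path_dist_le_walk walk_append)
      with \<open>path_dist A R x y = of_nat k\<close> shortest_walk(2) show ?thesis by simp
    qed simp
  qed simp
  show ?thesis unfolding met_def using zero commute triangle by blast
qed

lemma path_dist_le_1_iff:
  assumes refl: "\<And>x. x \<in> A \<Longrightarrow> R x x" and "x \<in> A" "y \<in> A"
  shows "path_dist A R x y \<le> 1 \<longleftrightarrow> R x y"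
proof
  assume "R x y"
  then have "walk A R x y 1" using assms by (simp add: walk_Suc_0_iff)
  then show "path_dist A R x y \<le> 1" using path_dist_le_walk by fastforce
next
  assume le: "path_dist A R x y \<le> 1"
  then show "R x y"
  proof (cases x y rule: path_dist_cases[where A = A and R = R])
    case (shortest_walk k)
    with le have "k = 0 \<or> k = 1" by auto
    with shortest_walk(1) show ?thesis using refl by (auto simp: walk_0_iff walk_Suc_0_iff)
  qed (simp add: top_unique)
qed

lemma rsrel_Q_rel: "met B e \<Longrightarrow> rsrel B (Q_rel e)"
  unfolding met_def rsrel_def Q_rel_def by auto

lemma rsrel_hom_Q_rel: "met_hom A d B e f \<Longrightarrow> rsrel_hom A (Q_rel d) B (Q_rel e) f"
  unfolding met_hom_def rsrel_hom_def Q_rel_def by (meson order_trans)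

lemma rsrel_hom_cong:
  assumes "\<And>x y. x \<in> B \<Longrightarrow> y \<in> B \<Longrightarrow> S x y \<longleftrightarrow> S' x y"
  shows "rsrel_hom A R B S f \<longleftrightarrow> rsrel_hom A R B S' f"
  using assms unfolding rsrel_hom_def Pi_def by auto

lemma dist_le_walk_length:
  assumes e: "met B e" and f: "rsrel_hom A R B (Q_rel e) f"
  shows "walk A R x y k \<Longrightarrow> e (f x) (f y) \<le> of_nat k"
proof (induction k arbitrary: y)
  case 0
  then have "x \<in> A" "y = x" by (simp_all add: walk_0_iff)
  with f have "f x \<in> B" unfolding rsrel_hom_def by blast
  with \<open>y = x\<close> show ?case using e unfolding met_def by simp
next
  case (Suc k)
  then obtain y' where y': "walk A R x y' k" "y \<in> A" "R y' y"
    by (auto simp: walk_Suc_iff)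
  have "x \<in> A" "y' \<in> A" using walk_in_carrier[OF y'(1)] by simp_all
  then have in_B: "f x \<in> B" "f y' \<in> B" "f y \<in> B"
    using f \<open>y \<in> A\<close> unfolding rsrel_hom_def by auto
  have step: "e (f y') (f y) \<le> 1"
    using f y' \<open>y' \<in> A\<close> unfolding rsrel_hom_def Q_rel_def by blast
  have "e (f x) (f y) \<le> e (f x) (f y') + e (f y') (f y)"
    using e in_B unfolding met_def by blast
  also have "\<dots> \<le> of_nat k + 1"
    using Suc.IH[OF y'(1)] step by (rule add_mono)
  finally show ?case by (simp add: add.commute)
qed

lemma dist_le_path_dist:
  assumes "met B e" and "rsrel_hom A R B (Q_rel e) f"
  shows "e (f x) (f y) \<le> path_dist A R x y"
  by (cases x y rule: path_dist_cases[where A = A and R = R])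
     (simp_all add: dist_le_walk_length[OF assms])

lemma met_hom_path_dist_iff:
  assumes "met B e"
  shows "met_hom A (path_dist A R) B e f \<longleftrightarrow> rsrel_hom A R B (Q_rel e) f"
proof
  assume f: "met_hom A (path_dist A R) B e f"
  have "e (f x) (f y) \<le> 1" if "x \<in> A" "y \<in> A" "R x y" for x y
  proof -
    have "e (f x) (f y) \<le> path_dist A R x y" using f that by (simp add: met_hom_def)
    also have "\<dots> \<le> 1" using path_dist_le_walk[of A R x y 1] that by (simp add: walk_Suc_0_iff)
    finally show ?thesis .
  qed
  then show "rsrel_hom A R B (Q_rel e) f"
    using f by (simp add: met_hom_def rsrel_hom_def Q_rel_def)
next
  assume f: "rsrel_hom A R B (Q_rel e) f"
  then show "met_hom A (path_dist A R) B e f"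
    using dist_le_path_dist[OF assms f] by (simp add: met_hom_def rsrel_hom_def)
qed

lemma rsrel_hom_iff_met_hom_path_dist:
  assumes "rsrel B S"
  shows "rsrel_hom A R B S f \<longleftrightarrow> met_hom A (path_dist A R) B (path_dist B S) f"
proof -
  have "rsrel_hom A R B S f \<longleftrightarrow> rsrel_hom A R B (Q_rel (path_dist B S)) f"
    using assms by (intro rsrel_hom_cong) (simp add: Q_rel_def path_dist_le_1_iff rsrel_def)
  also have "\<dots> \<longleftrightarrow> met_hom A (path_dist A R) B (path_dist B S) f"
    using assms by (intro met_hom_path_dist_iff[symmetric] met_path_dist) (simp add: rsrel_def)
  finally show ?thesis .
qed

theorem theorem5:
  fixes A :: "'a set" and R :: "'a \<Rightarrow> 'a \<Rightarrow> bool" and d :: "'a \<Rightarrow> 'a \<Rightarrow> ennreal"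
    and B :: "'b set" and S :: "'b \<Rightarrow> 'b \<Rightarrow> bool" and e :: "'b \<Rightarrow> 'b \<Rightarrow> ennreal"
    and f :: "'a \<Rightarrow> 'b"
  shows
    \<comment> \<open>P and Q are well defined on objects\<close>
    "(rsrel A R \<longrightarrow> met A (path_dist A R))
   \<and> (met B e \<longrightarrow> rsrel B (Q_rel e))
   \<comment> \<open>Q is well defined on morphisms\<close>
   \<and> (met A d \<longrightarrow> met B e \<longrightarrow> met_hom A d B e f \<longrightarrow> rsrel_hom A (Q_rel d) B (Q_rel e) f)
   \<comment> \<open>P is well defined on morphisms and fully faithful (P is the identity on maps)\<close>
   \<and> (rsrel A R \<longrightarrow> rsrel B S \<longrightarrow>
        (rsrel_hom A R B S f \<longleftrightarrow> met_hom A (path_dist A R) B (path_dist B S) f))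
   \<comment> \<open>adjunction P -| Q: Met(PX, Y) = RSRel(X, QY), the identity bijection (natural)\<close>
   \<and> (rsrel A R \<longrightarrow> met B e \<longrightarrow>
        (met_hom A (path_dist A R) B e f \<longleftrightarrow> rsrel_hom A R B (Q_rel e) f))"
proof (intro conjI impI)
  show "met A (path_dist A R)" if "rsrel A R"
    using that by (intro met_path_dist) (simp add: rsrel_def)
  show "rsrel B (Q_rel e)" if "met B e"
    using that by (rule rsrel_Q_rel)
  show "rsrel_hom A (Q_rel d) B (Q_rel e) f" if "met_hom A d B e f"
    using that by (rule rsrel_hom_Q_rel)
  show "rsrel_hom A R B S f \<longleftrightarrow> met_hom A (path_dist A R) B (path_dist B S) f" if "rsrel B S"
    using that by (rule rsrel_hom_iff_met_hom_path_dist)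
  show "met_hom A (path_dist A R) B e f \<longleftrightarrow> rsrel_hom A R B (Q_rel e) f" if "met B e"
    using that by (rule met_hom_path_dist_iff)
qed

end
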